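(* Let $Q_1,Q_2\in\mathbb{R}^{(m+n)\times(m+n)}$ be permutation matrices with $Q_1Q_2^{\mathsf T}=\begin{bmatrix}Q_{11}&Q_{12}\\Q_{21}&Q_{22}\end{bmatrix}$ ($Q_{11}\in\mathbb{R}^{m\times m}$, $Q_{22}\in\mathbb{R}^{n\times n}$). For $X\in\mathbb{C}^{n\times m}$, $Y\in\mathbb{C}^{m\times n}$ set $$W=Q_{22}-XQ_{12}+(Q_{21}-XQ_{11})Y\in\mathbb{C}^{n\times n},\qquad \widetilde W=Q_{11}^{\mathsf T}-YQ_{12}^{\mathsf T}+(Q_{21}^{\mathsf T}-YQ_{22}^{\mathsf T})X\in\mathbb{C}^{m\times m}.$$ Then $W$ is nonsingular if and only if $\widetilde W$ is nonsingular. Moreover, when they are nonsingular, for any $E\in\mathbb{C}^{m\times m}$, $F\in\mathbb{C}^{n\times n}$ the two formulas $$E_+=E\big[Q_{11}+(Q_{11}Y+Q_{12})W^{-1}(XQ_{11}-Q_{21})\big]E,\ \ F_+=FW^{-1}F,\ \ X_+=X+FW^{-1}(XQ_{11}-Q_{21})E,\ \ Y_+=Y+E(Q_{11}Y+Q_{12})W^{-1}F$$ and $$E_+=E\widetilde W^{-1}E,\ \ F_+=F\big[Q_{22}^{\mathsf T}+(Q_{22}^{\mathsf T}X+Q_{12}^{\mathsf T})\widetilde W^{-1}(YQ_{22}^{\mathsf T}-Q_{21}^{\mathsf T})\big]F,\ \ X_+=X+F(Q_{22}^{\mathsf T}X+Q_{12}^{\mathsf T})\widetilde W^{-1}E,\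 \ Y_+=Y+E\widetilde W^{-1}(YQ_{22}^{\mathsf T}-Q_{21}^{\mathsf T})F$$ produce the same quadruple $(E_+,F_+,X_+,Y_+)$. *)

theory Defs
  imports "Jordan_Normal_Form.Matrix" "HOL-Combinatorics.Permutations" Complex_Main
begin

definition perm_matrix :: "nat \<Rightarrow> real mat \<Rightarrow> bool" where
  "perm_matrix N Q \<longleftrightarrow> (\<exists>\<sigma>. \<sigma> permutes {..<N} \<and>
      Q = mat N N (\<lambda>(i,j). if \<sigma> i = j then 1 else 0))"

end

theory Submission
  imports Defs "Jordan_Normal_Form.Determinant"
begin

text \<open>
  The matrix \<open>Q = Q1 Q2\<^sup>T\<close> is orthogonal. Eliminating with unitriangular factors,
  \<open>M = [I 0; -X I] Q [I Y; 0 I]\<close> has lower right block \<open>W\<close>, and its inverse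
  \<open>[I -Y; 0 I] Q\<^sup>T [I 0; X I]\<close> has upper left block \<open>Wt\<close>. For a block matrix
  \<open>[A B; C D]\<close> with inverse \<open>[P R; S T]\<close>, the block \<open>D\<close> is invertible iff \<open>P\<close> is,
  and then \<open>P\<^sup>-\<^sup>1 = A - B D\<^sup>-\<^sup>1 C\<close>, \<open>D\<^sup>-\<^sup>1 = T - S P\<^sup>-\<^sup>1 R\<close>, \<open>D\<^sup>-\<^sup>1 C = - S P\<^sup>-\<^sup>1\<close>
  and \<open>B D\<^sup>-\<^sup>1 = - P\<^sup>-\<^sup>1 R\<close>. Applied to \<open>M\<close>, these identities turn each of the two
  formulas for \<open>(E\<^sub>+, F\<^sub>+, X\<^sub>+, Y\<^sub>+)\<close> into the other.
\<close>

lemma uminus_zero_mat [simp]: "- 0\<^sub>m nr nc = (0\<^sub>m nr nc :: 'a :: group_add mat)"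
  by (intro eq_matI) auto

lemma uminus_add_eq_minus_mat:
  fixes A B :: "'a :: ab_group_add mat"
  assumes "A \<in> carrier_mat nr nc" "B \<in> carrier_mat nr nc"
  shows "- A + B = B - A"
  using assms by (intro eq_matI) auto

lemma add_uminus_eq_zero_mat_iff:
  fixes A B :: "'a :: group_add mat"
  assumes "A \<in> carrier_mat nr nc" "B \<in> carrier_mat nr nc"
  shows "A + - B = 0\<^sub>m nr nc \<longleftrightarrow> A = B"
proof
  assume AB: "A + - B = 0\<^sub>m nr nc"
  show "A = B"
  proof (rule eq_matI)
    fix i j assume "i < dim_row B" "j < dim_col B"
    then have "A $$ (i, j) + - B $$ (i, j) = 0"
      using assms arg_cong[OF AB, of "\<lambda>M. M $$ (i, j)"] by simp
    then show "A $$ (i, j) = B $$ (i, j)"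
      by (simp add: add_eq_0_iff2)
  qed (use assms in auto)
next
  assume "A = B"
  then show "A + - B = 0\<^sub>m nr nc"
    using assms by (simp add: add_uminus_minus_mat[of B nr nc B])
qed

lemma mult_right_inverse_cancel_mat:
  fixes A :: "'a :: semiring_1 mat"
  assumes "A \<in> carrier_mat nr n" "B \<in> carrier_mat n n" "B' \<in> carrier_mat n n" "C \<in> carrier_mat n nc"
    and "B * B' = 1\<^sub>m n"
  shows "A * B * (B' * C) = A * C"
  using assms
  by (simp add: assoc_mult_mat[of A nr n B n "B' * C" nc] flip: assoc_mult_mat[of B n n B' n C nc])

lemma left_inverse_eq_right_inverse_mat:
  fixes A :: "'a :: semiring_1 mat"
  assumes "A \<in> carrier_mat n n" "L \<in> carrier_mat n n" "R \<in> carrier_mat n n"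
    and "L * A = 1\<^sub>m n" "A * R = 1\<^sub>m n"
  shows "L = R"
  using assms by (metis assoc_mult_mat left_mult_one_mat right_mult_one_mat)

lemma invertible_mat_iff_right_inverse:
  fixes A :: "'a :: field mat"
  assumes A: "A \<in> carrier_mat n n"
  shows "invertible_mat A \<longleftrightarrow> (\<exists>B \<in> carrier_mat n n. A * B = 1\<^sub>m n)"
proof
  assume "invertible_mat A"
  then obtain B where AB: "A * B = 1\<^sub>m n" and BA: "B * A = 1\<^sub>m (dim_row B)"
    using A unfolding invertible_mat_def inverts_mat_def by auto
  have "B \<in> carrier_mat n n"
    using A AB BA by (metis carrier_matD carrier_matI index_mult_mat(2,3) index_one_mat(2,3))
  with AB show "\<exists>B \<in> carrier_mat n n. A * B = 1\<^sub>m n" by blast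
next
  assume "\<exists>B \<in> carrier_mat n n. A * B = 1\<^sub>m n"
  then obtain B where B: "B \<in> carrier_mat n n" and AB: "A * B = 1\<^sub>m n" by blast
  have "B * A = 1\<^sub>m n"
    using mat_mult_left_right_inverse[OF A B AB] .
  with A B AB show "invertible_mat A"
    unfolding invertible_mat_def inverts_mat_def by auto
qed

lemma split_block_four_block_mat:
  assumes "A \<in> carrier_mat nr1 nc1" "B \<in> carrier_mat nr1 nc2"
    "C \<in> carrier_mat nr2 nc1" "D \<in> carrier_mat nr2 nc2"
  shows "split_block (four_block_mat A B C D) nr1 nc1 = (A, B, C, D)"
  using assms unfolding split_block_def Let_def by (auto intro!: eq_matI)

lemma four_block_mat_eq_one_mat:
  assumes "A \<in> carrier_mat m m" "B \<in> carrier_mat m n"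
    "C \<in> carrier_mat n m" "D \<in> carrier_mat n n"
    and "four_block_mat A B C D = 1\<^sub>m (m + n)"
  shows "A = 1\<^sub>m m" "B = 0\<^sub>m m n" "C = 0\<^sub>m n m" "D = 1\<^sub>m n"
proof -
  have "(A, B, C, D) = split_block (four_block_mat (1\<^sub>m m) (0\<^sub>m m n) (0\<^sub>m n m) (1\<^sub>m n)) m m"
    using split_block_four_block_mat[OF assms(1-4)] assms(5) by simp
  also have "\<dots> = (1\<^sub>m m, 0\<^sub>m m n, 0\<^sub>m n m, 1\<^sub>m n)"
    by (rule split_block_four_block_mat) auto
  finally show "A = 1\<^sub>m m" "B = 0\<^sub>m m n" "C = 0\<^sub>m n m" "D = 1\<^sub>m n"
    by simp_all
qed

text \<open>\<open>C\<close> and \<open>R\<close> enter the block matrices negated, so that the relations between the blocks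
  are free of signs and the inversion formulas take the shape of those in the theorem.\<close>

context
  fixes A B C D P R S T :: "'a :: field mat" and m n :: nat
  assumes carrier: "A \<in> carrier_mat m m" "B \<in> carrier_mat m n" "C \<in> carrier_mat n m"
      "D \<in> carrier_mat n n" "P \<in> carrier_mat m m" "R \<in> carrier_mat m n"
      "S \<in> carrier_mat n m" "T \<in> carrier_mat n n"
    and block_inverse: "four_block_mat A B (- C) D * four_block_mat P (- R) S T = 1\<^sub>m (m + n)"
begin

lemma block_inverse_relations:
  "P * A + R * C = 1\<^sub>m m" "P * B = R * D" "D * S = C * P" "C * R + D * T = 1\<^sub>m n"
proof -
  have "four_block_mat P (- R) S T * four_block_mat A B (- C) D = 1\<^sub>m (m + n)"
    using carrier by (intro mat_mult_left_right_inverse[OF _ _ block_inverse]) auto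
  then have inv_left: "four_block_mat (P * A + R * C) (P * B + - (R * D))
      (S * A + - (T * C)) (S * B + T * D) = 1\<^sub>m (m + n)"
    using carrier by (simp add: mult_four_block_mat[of _ m m _ n _ n _ _ m _ n])
  have left: "P * A + R * C = 1\<^sub>m m" "P * B + - (R * D) = 0\<^sub>m m n"
    by (rule four_block_mat_eq_one_mat[OF _ _ _ _ inv_left]; use carrier in auto)+
  have inv_right: "four_block_mat (A * P + B * S) (- (A * R) + B * T)
      (- (C * P) + D * S) (C * R + D * T) = 1\<^sub>m (m + n)"
    using block_inverse carrier
    by (simp add: mult_four_block_mat[of _ m m _ n _ n _ _ m _ n])
  have right: "- (C * P) + D * S = 0\<^sub>m n m" "C * R + D * T = 1\<^sub>m n"
    by (rule four_block_mat_eq_one_mat[OF _ _ _ _ inv_right]; use carrier in auto)+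
  show "P * A + R * C = 1\<^sub>m m" "C * R + D * T = 1\<^sub>m n"
    using left right by simp_all
  show "P * B = R * D" "D * S = C * P"
    using left right carrier
    by (simp_all add: add_uminus_eq_zero_mat_iff[of _ m n] add_uminus_eq_zero_mat_iff[of _ n m]
        comm_add_mat[of "- (C * P)" n m])
qed

lemma schur_complement_right_inverse_upper:
  assumes inv_D: "D' \<in> carrier_mat n n" "D * D' = 1\<^sub>m n"
  shows "P * (A + B * D' * C) = 1\<^sub>m m"
proof -
  have "P * (A + B * D' * C) = P * A + (P * B) * D' * C"
    using carrier inv_D
    by (simp add: mult_add_distrib_mat assoc_mult_mat[of _ m _ _ n] assoc_mult_mat[of _ m n _ n])
  also have "\<dots> = P * A + R * (D * D') * C"
    using carrier inv_D by (simp add: block_inverse_relations)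
  also have "\<dots> = 1\<^sub>m m"
    using carrier inv_D by (simp add: block_inverse_relations)
  finally show ?thesis .
qed

lemma schur_complement_right_inverse_lower:
  assumes inv_P: "P' \<in> carrier_mat m m" "P * P' = 1\<^sub>m m"
  shows "D * (T + S * P' * R) = 1\<^sub>m n"
proof -
  have "D * (T + S * P' * R) = D * T + (D * S) * P' * R"
    using carrier inv_P
    by (simp add: mult_add_distrib_mat assoc_mult_mat[of _ n _ _ m] assoc_mult_mat[of _ n m _ m])
  also have "\<dots> = D * T + C * (P * P') * R"
    using carrier inv_P by (simp add: block_inverse_relations)
  also have "\<dots> = 1\<^sub>m n"
    using carrier inv_P by (simp add: block_inverse_relations comm_add_mat[of "D * T" n n])
  finally show ?thesis .
qed

lemma invertible_lower_right_iff_upper_left: "invertible_mat D \<longleftrightarrow> invertible_mat P"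
proof
  assume "invertible_mat D"
  then obtain D' where D': "D' \<in> carrier_mat n n" "D * D' = 1\<^sub>m n"
    using invertible_mat_iff_right_inverse[OF carrier(4)] by blast
  have "A + B * D' * C \<in> carrier_mat m m"
    using carrier D' by auto
  with schur_complement_right_inverse_upper[OF D'] show "invertible_mat P"
    using invertible_mat_iff_right_inverse[OF carrier(5)] by blast
next
  assume "invertible_mat P"
  then obtain P' where P': "P' \<in> carrier_mat m m" "P * P' = 1\<^sub>m m"
    using invertible_mat_iff_right_inverse[OF carrier(5)] by blast
  have "T + S * P' * R \<in> carrier_mat n n"
    using carrier P' by auto
  with schur_complement_right_inverse_lower[OF P'] show "invertible_mat D"
    using invertible_mat_iff_right_inverse[OF carrier(4)] by blast
qed

lemma schur_complement_inverses:
  assumes inv_D: "D' \<in> carrier_mat n n" "D * D' = 1\<^sub>m n" "D' * D = 1\<^sub>m n"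
    and inv_P: "P' \<in> carrier_mat m m" "P * P' = 1\<^sub>m m" "P' * P = 1\<^sub>m m"
  shows "P' = A + B * D' * C" "D' = T + S * P' * R" "D' * C = S * P'" "B * D' = P' * R"
proof -
  show "P' = A + B * D' * C"
    using carrier inv_D
    by (intro left_inverse_eq_right_inverse_mat[OF carrier(5) inv_P(1) _ inv_P(3)
        schur_complement_right_inverse_upper[OF inv_D(1,2)]]) auto
  show "D' = T + S * P' * R"
    using carrier inv_P
    by (intro left_inverse_eq_right_inverse_mat[OF carrier(4) inv_D(1) _ inv_D(3)
        schur_complement_right_inverse_lower[OF inv_P(1,2)]]) auto
  have "D' * C = D' * ((C * P) * P')"
    using carrier inv_D inv_P by simp
  also have "\<dots> = D' * ((D * S) * P')"
    by (simp only: block_inverse_relations(3))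
  also have "\<dots> = (D' * D) * (S * P')"
    using carrier inv_D(1) inv_P(1) by (simp add: assoc_mult_mat[of D' n n D n "S * P'" m])
  also have "\<dots> = S * P'"
    unfolding inv_D(3) using carrier inv_P by simp
  finally show "D' * C = S * P'" .
  have "B * D' = ((P' * P) * B) * D'"
    unfolding inv_P(3) using carrier inv_D by simp
  also have "\<dots> = (P' * (R * D)) * D'"
    using carrier inv_P(1) by (simp add: assoc_mult_mat[of P' m m P m B n] block_inverse_relations(2))
  also have "\<dots> = (P' * R) * (D * D')"
    using carrier inv_D(1) inv_P(1)
    by (simp add: assoc_mult_mat[of P' m m "R * D" n D' n] assoc_mult_mat[of P' m m R n "D * D'" n])
  also have "\<dots> = P' * R"
    unfolding inv_D(2) using carrier inv_P by simp
  finally show "B * D' = P' * R" .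
qed

end

lemma perm_matrix_carrier: "perm_matrix N P \<Longrightarrow> P \<in> carrier_mat N N"
  unfolding perm_matrix_def by auto

lemma perm_matrix_mult_transpose:
  assumes "perm_matrix N P"
  shows "P * transpose_mat P = 1\<^sub>m N"
proof -
  from assms obtain \<sigma> where \<sigma>: "\<sigma> permutes {..<N}"
    and P: "P = mat N N (\<lambda>(i, j). if \<sigma> i = j then 1 else 0)"
    unfolding perm_matrix_def by auto
  have inj: "\<sigma> i = \<sigma> j \<longleftrightarrow> i = j" for i j
    using \<sigma> by (metis permutes_inj injD)
  have range: "i < N \<Longrightarrow> \<sigma> i < N" for i
    using \<sigma> by (meson lessThan_iff permutes_in_image)
  show ?thesis
  proof (rule eq_matI)
    fix i j assume i: "i < dim_row (1\<^sub>m N :: real mat)" and j: "j < dim_col (1\<^sub>m N :: real mat)"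
    have "(P * transpose_mat P) $$ (i, j)
        = (\<Sum>k<N. (if \<sigma> i = k then 1 else 0) * (if \<sigma> j = k then 1 else 0 :: real))"
      using i j unfolding P by (simp add: scalar_prod_def lessThan_atLeast0)
    also have "\<dots> = (\<Sum>k\<in>{\<sigma> i}. (if \<sigma> j = k then 1 else 0 :: real))"
      by (rule sum.mono_neutral_cong_right) (use range i in auto)
    also have "\<dots> = 1\<^sub>m N $$ (i, j)"
      using i j inj by auto
    finally show "(P * transpose_mat P) $$ (i, j) = 1\<^sub>m N $$ (i, j)" .
  qed (use P in auto)
qed

lemma mult_transpose_orthogonal:
  fixes A B :: "'a :: field mat"
  assumes A: "A \<in> carrier_mat N N" "A * transpose_mat A = 1\<^sub>m N"
    and B: "B \<in> carrier_mat N N" "B * transpose_mat B = 1\<^sub>m N"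
  shows "A * transpose_mat B * transpose_mat (A * transpose_mat B) = 1\<^sub>m N"
proof -
  have "transpose_mat B * B = 1\<^sub>m N"
    by (rule mat_mult_left_right_inverse[OF B(1) _ B(2)]) (use B in auto)
  then have "A * transpose_mat B * (B * transpose_mat A) = 1\<^sub>m N"
    using A B by (simp add: mult_right_inverse_cancel_mat[of A N N])
  moreover have "transpose_mat (A * transpose_mat B) = B * transpose_mat A"
    using A B by (simp add: transpose_mult[of A N N])
  ultimately show ?thesis
    by simp
qed

lemma of_real_orthogonal:
  assumes "A \<in> carrier_mat N N" "A * transpose_mat A = 1\<^sub>m N"
  shows "map_mat of_real A * transpose_mat (map_mat of_real A) = (1\<^sub>m N :: 'a :: real_algebra_1 mat)"
  using assms
  by (simp add: map_mat_transpose of_real_hom.mat_hom_one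
      flip: of_real_hom.mat_hom_mult[of A N N "transpose_mat A" N])

lemma perm_matrix_product_orthogonal:
  assumes "perm_matrix N Q1" "perm_matrix N Q2"
  defines "Q \<equiv> map_mat of_real (Q1 * transpose_mat Q2) :: 'a :: real_algebra_1 mat"
  shows "Q \<in> carrier_mat N N" "Q * transpose_mat Q = 1\<^sub>m N"
proof -
  have carrier: "Q1 \<in> carrier_mat N N" "Q2 \<in> carrier_mat N N"
    using assms(1,2) by (simp_all add: perm_matrix_carrier)
  then show "Q \<in> carrier_mat N N"
    unfolding Q_def by simp
  have "Q1 * transpose_mat Q2 * transpose_mat (Q1 * transpose_mat Q2) = 1\<^sub>m N"
    by (rule mult_transpose_orthogonal[OF carrier(1) perm_matrix_mult_transpose[OF assms(1)]
          carrier(2) perm_matrix_mult_transpose[OF assms(2)]])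
  then show "Q * transpose_mat Q = 1\<^sub>m N"
    unfolding Q_def by (rule of_real_orthogonal[rotated]) (use carrier in simp)
qed

lemma lower_unitriangular_four_block_inverse:
  fixes Z :: "'a :: ring_1 mat"
  assumes "Z \<in> carrier_mat n m"
  shows "four_block_mat (1\<^sub>m m) (0\<^sub>m m n) Z (1\<^sub>m n) * four_block_mat (1\<^sub>m m) (0\<^sub>m m n) (- Z) (1\<^sub>m n)
    = 1\<^sub>m (m + n)"
  using assms by (simp add: mult_four_block_mat[of _ m m _ n _ n _ _ m _ n] add_uminus_minus_mat[of Z n m])

lemma upper_unitriangular_four_block_inverse:
  fixes Z :: "'a :: ring_1 mat"
  assumes "Z \<in> carrier_mat m n"
  shows "four_block_mat (1\<^sub>m m) Z (0\<^sub>m n m) (1\<^sub>m n) * four_block_mat (1\<^sub>m m) (- Z) (0\<^sub>m n m) (1\<^sub>m n)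
    = 1\<^sub>m (m + n)"
  using assms by (simp add: mult_four_block_mat[of _ m m _ n _ n _ _ m _ n] add_uminus_minus_mat[of Z m n])

lemma four_block_unitriangular_elimination:
  fixes Q11 Q12 Q21 Q22 X Y :: "'a :: ring_1 mat"
  assumes carrier: "Q11 \<in> carrier_mat m m" "Q12 \<in> carrier_mat m n" "Q21 \<in> carrier_mat n m"
      "Q22 \<in> carrier_mat n n" "X \<in> carrier_mat n m" "Y \<in> carrier_mat m n"
  shows "four_block_mat (1\<^sub>m m) (0\<^sub>m m n) (- X) (1\<^sub>m n) * four_block_mat Q11 Q12 Q21 Q22
      * four_block_mat (1\<^sub>m m) Y (0\<^sub>m n m) (1\<^sub>m n)
    = four_block_mat Q11 (Q11 * Y + Q12) (- (X * Q11 - Q21)) (Q22 - X * Q12 + (Q21 - X * Q11) * Y)"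
    (is "?lhs = ?rhs")
proof -
  have "?lhs = four_block_mat Q11 (Q11 * Y + Q12) (- (X * Q11) + Q21)
      ((- (X * Q11) + Q21) * Y + (- (X * Q12) + Q22))"
    using carrier by (simp add: mult_four_block_mat[of _ m m _ n _ n _ _ m _ n])
  also have "\<dots> = ?rhs"
  proof (rule cong_four_block_mat)
    show "- (X * Q11) + Q21 = - (X * Q11 - Q21)"
      using carrier by (intro eq_matI) auto
    have "(- (X * Q11) + Q21) * Y + (- (X * Q12) + Q22) = (Q21 - X * Q11) * Y + (Q22 - X * Q12)"
      using carrier by (simp add: uminus_add_eq_minus_mat[of _ n m] uminus_add_eq_minus_mat[of _ n n])
    also have "\<dots> = Q22 - X * Q12 + (Q21 - X * Q11) * Y"
      using carrier by (intro comm_add_mat) auto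
    finally show "(- (X * Q11) + Q21) * Y + (- (X * Q12) + Q22)
      = Q22 - X * Q12 + (Q21 - X * Q11) * Y" .
  qed simp_all
  finally show ?thesis .
qed

lemma four_block_transpose_unitriangular_elimination:
  fixes Q11 Q12 Q21 Q22 X Y :: "'a :: ring_1 mat"
  assumes carrier: "Q11 \<in> carrier_mat m m" "Q12 \<in> carrier_mat m n" "Q21 \<in> carrier_mat n m"
      "Q22 \<in> carrier_mat n n" "X \<in> carrier_mat n m" "Y \<in> carrier_mat m n"
  shows "four_block_mat (1\<^sub>m m) (- Y) (0\<^sub>m n m) (1\<^sub>m n) * transpose_mat (four_block_mat Q11 Q12 Q21 Q22)
      * four_block_mat (1\<^sub>m m) (0\<^sub>m m n) X (1\<^sub>m n)
    = four_block_mat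
        (transpose_mat Q11 - Y * transpose_mat Q12 + (transpose_mat Q21 - Y * transpose_mat Q22) * X)
        (- (Y * transpose_mat Q22 - transpose_mat Q21))
        (transpose_mat Q22 * X + transpose_mat Q12) (transpose_mat Q22)"
    (is "?lhs = ?rhs")
proof -
  have "?lhs = four_block_mat
        (transpose_mat Q11 + - (Y * transpose_mat Q12) + (transpose_mat Q21 + - (Y * transpose_mat Q22)) * X)
        (transpose_mat Q21 + - (Y * transpose_mat Q22))
        (transpose_mat Q12 + transpose_mat Q22 * X) (transpose_mat Q22)"
    using carrier by (simp add: transpose_four_block_mat mult_four_block_mat[of _ m m _ n _ n _ _ m _ n])
  also have "\<dots> = ?rhs"
  proof (rule cong_four_block_mat)
    show "transpose_mat Q11 + - (Y * transpose_mat Q12) + (transpose_mat Q21 + - (Y * transpose_mat Q22)) * X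
      = transpose_mat Q11 - Y * transpose_mat Q12 + (transpose_mat Q21 - Y * transpose_mat Q22) * X"
      using carrier by (simp add: add_uminus_minus_mat[of _ m m] add_uminus_minus_mat[of _ m n])
    show "transpose_mat Q21 + - (Y * transpose_mat Q22) = - (Y * transpose_mat Q22 - transpose_mat Q21)"
      using carrier by (intro eq_matI) auto
    show "transpose_mat Q12 + transpose_mat Q22 * X = transpose_mat Q22 * X + transpose_mat Q12"
      using carrier by (intro comm_add_mat) auto
  qed simp
  finally show ?thesis .
qed

lemma orthogonal_four_block_elimination:
  fixes Q11 Q12 Q21 Q22 X Y :: "'a :: ring_1 mat"
  assumes carrier: "Q11 \<in> carrier_mat m m" "Q12 \<in> carrier_mat m n" "Q21 \<in> carrier_mat n m"
      "Q22 \<in> carrier_mat n n" "X \<in> carrier_mat n m" "Y \<in> carrier_mat m n"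
    and orthogonal: "four_block_mat Q11 Q12 Q21 Q22 * transpose_mat (four_block_mat Q11 Q12 Q21 Q22)
      = 1\<^sub>m (m + n)"
  shows "four_block_mat Q11 (Q11 * Y + Q12) (- (X * Q11 - Q21)) (Q22 - X * Q12 + (Q21 - X * Q11) * Y) *
      four_block_mat
        (transpose_mat Q11 - Y * transpose_mat Q12 + (transpose_mat Q21 - Y * transpose_mat Q22) * X)
        (- (Y * transpose_mat Q22 - transpose_mat Q21))
        (transpose_mat Q22 * X + transpose_mat Q12) (transpose_mat Q22)
    = 1\<^sub>m (m + n)"
proof -
  define Q where "Q = four_block_mat Q11 Q12 Q21 Q22"
  define L where "L (Z :: 'a mat) = four_block_mat (1\<^sub>m m) (0\<^sub>m m n) Z (1\<^sub>m n)" for Z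
  define U where "U (Z :: 'a mat) = four_block_mat (1\<^sub>m m) Z (0\<^sub>m n m) (1\<^sub>m n)" for Z
  have Q: "Q \<in> carrier_mat (m + n) (m + n)"
    unfolding Q_def using carrier by auto
  have L: "L Z \<in> carrier_mat (m + n) (m + n)" and U: "U Z \<in> carrier_mat (m + n) (m + n)" for Z
    unfolding L_def U_def by auto
  have "(L (- X) * Q * U Y) * (U (- Y) * transpose_mat Q * L X)
      = (L (- X) * Q * U Y) * (U (- Y) * (transpose_mat Q * L X))"
    using Q L U
    by (simp add: assoc_mult_mat[of "U (- Y)" "m + n" "m + n" "transpose_mat Q" "m + n" "L X" "m + n"])
  also have "\<dots> = (L (- X) * Q) * (transpose_mat Q * L X)"
    using Q L U upper_unitriangular_four_block_inverse[OF carrier(6)]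
    unfolding U_def by (intro mult_right_inverse_cancel_mat) auto
  also have "\<dots> = L (- X) * L X"
    using Q L orthogonal[folded Q_def] by (intro mult_right_inverse_cancel_mat) auto
  also have "\<dots> = 1\<^sub>m (m + n)"
    using lower_unitriangular_four_block_inverse[of "- X" n m] carrier unfolding L_def by simp
  finally show ?thesis
    unfolding L_def U_def Q_def
    using four_block_unitriangular_elimination[OF carrier] four_block_transpose_unitriangular_elimination[OF carrier]
    by simp
qed

theorem mainTheorem3:
  fixes m n :: nat
    and Q1 Q2 :: "real mat"
    and Q11 Q12 Q21 Q22 X Y W Wt :: "complex mat"
  assumes Q1: "perm_matrix (m + n) Q1"
    and Q2: "perm_matrix (m + n) Q2"
    and blocks: "split_block (map_mat complex_of_real (Q1 * transpose_mat Q2)) m m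
                   = (Q11, Q12, Q21, Q22)"
    and X: "X \<in> carrier_mat n m"
    and Y: "Y \<in> carrier_mat m n"
    and W: "W = Q22 - X * Q12 + (Q21 - X * Q11) * Y"
    and Wt: "Wt = transpose_mat Q11 - Y * transpose_mat Q12
                 + (transpose_mat Q21 - Y * transpose_mat Q22) * X"
  shows "(invertible_mat W \<longleftrightarrow> invertible_mat Wt) \<and>
    (\<forall>Wi Wti E F.
       Wi \<in> carrier_mat n n \<and> W * Wi = 1\<^sub>m n \<and> Wi * W = 1\<^sub>m n \<and>
       Wti \<in> carrier_mat m m \<and> Wt * Wti = 1\<^sub>m m \<and> Wti * Wt = 1\<^sub>m m \<and>
       E \<in> carrier_mat m m \<and> F \<in> carrier_mat n n \<longrightarrow>
         E * (Q11 + (Q11 * Y + Q12) * Wi * (X * Q11 - Q21)) * E = E * Wti * E \<and>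
         F * Wi * F = F * (transpose_mat Q22 + (transpose_mat Q22 * X + transpose_mat Q12) * Wti
                             * (Y * transpose_mat Q22 - transpose_mat Q21)) * F \<and>
         X + F * Wi * (X * Q11 - Q21) * E = X + F * (transpose_mat Q22 * X + transpose_mat Q12) * Wti * E \<and>
         Y + E * (Q11 * Y + Q12) * Wi * F = Y + E * Wti * (Y * transpose_mat Q22 - transpose_mat Q21) * F)"
proof -
  note Q = perm_matrix_product_orthogonal[OF Q1 Q2, where 'a = complex]
  note Q_split = split_block[OF blocks carrier_matD[OF Q(1)]]
  have block_inverse:
    "four_block_mat Q11 (Q11 * Y + Q12) (- (X * Q11 - Q21)) W *
     four_block_mat Wt (- (Y * transpose_mat Q22 - transpose_mat Q21))
       (transpose_mat Q22 * X + transpose_mat Q12) (transpose_mat Q22) = 1\<^sub>m (m + n)"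
    using Q(2) unfolding W Wt Q_split(5)
    by (rule orthogonal_four_block_elimination[OF Q_split(1-4) X Y])
  have blocks_carrier: "Q11 \<in> carrier_mat m m" "Q11 * Y + Q12 \<in> carrier_mat m n"
    "X * Q11 - Q21 \<in> carrier_mat n m" "W \<in> carrier_mat n n" "Wt \<in> carrier_mat m m"
    "Y * transpose_mat Q22 - transpose_mat Q21 \<in> carrier_mat m n"
    "transpose_mat Q22 * X + transpose_mat Q12 \<in> carrier_mat n m" "transpose_mat Q22 \<in> carrier_mat n n"
    unfolding W Wt using Q_split(1-4) X Y by auto
  note schur = invertible_lower_right_iff_upper_left[OF blocks_carrier block_inverse]
    schur_complement_inverses[OF blocks_carrier block_inverse]
  show ?thesis
  proof (intro conjI allI impI)
    show "invertible_mat W \<longleftrightarrow> invertible_mat Wt"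
      by (rule schur(1))
    fix Wi Wti E F :: "complex mat"
    assume "Wi \<in> carrier_mat n n \<and> W * Wi = 1\<^sub>m n \<and> Wi * W = 1\<^sub>m n \<and>
       Wti \<in> carrier_mat m m \<and> Wt * Wti = 1\<^sub>m m \<and> Wti * Wt = 1\<^sub>m m \<and>
       E \<in> carrier_mat m m \<and> F \<in> carrier_mat n n"
    then have Wi: "Wi \<in> carrier_mat n n" "W * Wi = 1\<^sub>m n" "Wi * W = 1\<^sub>m n"
      and Wti: "Wti \<in> carrier_mat m m" "Wt * Wti = 1\<^sub>m m" "Wti * Wt = 1\<^sub>m m"
      and EF: "E \<in> carrier_mat m m" "F \<in> carrier_mat n n"
      by auto
    note formulas = schur(2-5)[OF Wi Wti]
    show "E * (Q11 + (Q11 * Y + Q12) * Wi * (X * Q11 - Q21)) * E = E * Wti * E"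
      by (simp only: formulas(1))
    show "F * Wi * F = F * (transpose_mat Q22 + (transpose_mat Q22 * X + transpose_mat Q12) * Wti
        * (Y * transpose_mat Q22 - transpose_mat Q21)) * F"
      by (simp only: formulas(2))
    show "X + F * Wi * (X * Q11 - Q21) * E = X + F * (transpose_mat Q22 * X + transpose_mat Q12) * Wti * E"
      using blocks_carrier Wi Wti EF by (simp add: formulas(3))
    show "Y + E * (Q11 * Y + Q12) * Wi * F = Y + E * Wti * (Y * transpose_mat Q22 - transpose_mat Q21) * F"
      using blocks_carrier Wi Wti EF by (simp add: formulas(4))
  qed
qed

end
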